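(* Let $n\geq 5$, let $P=(Y,X,Z)$ be a path of length two in $AQ_n$, and let $U\in N_{AQ_n}(P)$. Then $|N_{AQ_n}(\{U,X,Y,Z\})|\geq 8n-31$. If moreover $Z=\overline{X}_n$, then $|N_{AQ_n}(\{U,X,Y,Z\})|\geq 8n-29$.
   Context: The $n$-dimensional augmented cube $AQ_n$ has vertex set $\{0,1\}^n$, vertices written as strings $X=x_nx_{n-1}\cdots x_1$. For $1\le i\le n$ let $X_i=x_n\cdots x_{i+1}\bar x_i x_{i-1}\cdots x_1$ (flip bit $i$) and $\overline{X}_i=x_n\cdots x_{i+1}\bar x_i\bar x_{i-1}\cdots\bar x_1$ (flip bits $i,\dots,1$), where $\bar x=1-x$. Two distinct vertices $X,Y$ are adjacent iff $Y=X_i$ for some $1\le i\le n$ or $Y=\overline{X}_i$ for some $2\le i\le n$. For a vertex set (or subgraph) $T$, $N_{AQ_n}(T)=\bigcup_{V\in T}N_{AQ_n}(V)\setminus T$, where $N_{AQ_n}(V)$ is the neighbor set of $V$. *)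

theory Defs
  imports Main
begin

text \<open>A vertex X = x_n ... x_1 of AQ_n is encoded as the set of positions i in {1..n}
  with x_i = 1.  Flipping bit i is symmetric difference with {i}; flipping bits i,...,1
  is symmetric difference with {1..i}.\<close>

definition AQ_vertices :: "nat \<Rightarrow> nat set set" where
  "AQ_vertices n = Pow {1..n}"

definition flip_bit :: "nat set \<Rightarrow> nat \<Rightarrow> nat set" where
  "flip_bit X i = (X - {i}) \<union> ({i} - X)"

definition flip_low :: "nat set \<Rightarrow> nat \<Rightarrow> nat set" where
  "flip_low X i = (X - {1..i}) \<union> ({1..i} - X)"

definition AQ_adj :: "nat \<Rightarrow> nat set \<Rightarrow> nat set \<Rightarrow> bool" where
  "AQ_adj n X Y \<longleftrightarrow> X \<in> AQ_vertices n \<and> Y \<in> AQ_vertices n \<and> X \<noteq> Y \<and>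
     ((\<exists>i\<in>{1..n}. Y = flip_bit X i) \<or> (\<exists>i\<in>{2..n}. Y = flip_low X i))"

definition AQ_nbr :: "nat \<Rightarrow> nat set \<Rightarrow> nat set set" where
  "AQ_nbr n V = {W. AQ_adj n V W}"

definition AQ_N :: "nat \<Rightarrow> nat set set \<Rightarrow> nat set set" where
  "AQ_N n T = (\<Union>V\<in>T. AQ_nbr n V) - T"

definition AQ_path2 :: "nat \<Rightarrow> nat set \<Rightarrow> nat set \<Rightarrow> nat set \<Rightarrow> bool" where
  "AQ_path2 n Y X Z \<longleftrightarrow> Y \<noteq> X \<and> X \<noteq> Z \<and> Y \<noteq> Z \<and> AQ_adj n Y X \<and> AQ_adj n X Z"

end

theory Submission
  imports Defs
begin

text \<open>
  Read vertices of AQ_n as subsets of {1..n}, so that every generator acts by symmetric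
  difference with {i} or with {1..i}. The GF(2)-linear map sending x to the vector with
  entries x_1 + x_2 and x_(i-1) + x_(i+1) for 2 <= i <= n+1 (where x_(n+1) = 0) is injective and
  turns these generators into the 2n - 1 "near pairs" {i, j} of {1..n+1} with 0 < j - i <= 2.
  So two vertices v, w have as many common neighbours as there are near pairs e for which
  e + v + w is again a near pair. This count is at most 4, and it is at least 3 only when
  v + w is {a, a+1} with a >= 2, or {a, a+1, a+2, a+3}.

  Bonferroni's inequality for the four neighbourhoods of U, X, Y, Z then bounds the
  neighbourhood by 4(2n - 1), minus the six pairwise common-neighbour counts, plus the
  common neighbours of X, Y, Z, minus the four vertices. The three counts along the path
  add up to at most 11 plus the triple term: if all three are at least 3, then X + Y and
  X + Z form a staircase {a, a+1}, {a+2, a+3}, and X + {a+1, a+2} is a common neighbour of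
  X, Y and Z. If Z is the complement of X, then X + Z is the last near pair
  {n, n+1}, which has only two decompositions, and the bound improves by 2.
\<close>

definition symdiff :: "'a set \<Rightarrow> 'a set \<Rightarrow> 'a set" (infixl \<open>\<triangle>\<close> 70) where
  "A \<triangle> B = sym_diff A B"

lemma mem_symdiff [simp]: "x \<in> A \<triangle> B \<longleftrightarrow> (x \<in> A) \<noteq> (x \<in> B)"
  by (auto simp: symdiff_def)

lemma symdiff_cancel [simp]: "A \<triangle> (A \<triangle> B) = B" "A \<triangle> B \<triangle> B = A" "A \<triangle> A = {}"
  by auto

lemma symdiff_left_cancel_iff [simp]: "A \<triangle> B = A \<triangle> C \<longleftrightarrow> B = C"
  by (metis symdiff_cancel(1))

lemma symdiff_eq_empty_iff [simp]: "A \<triangle> B = {} \<longleftrightarrow> A = B"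
  by auto

lemma symdiff_subset: "A \<subseteq> C \<Longrightarrow> B \<subseteq> C \<Longrightarrow> A \<triangle> B \<subseteq> C"
  unfolding symdiff_def by blast

lemma card_symdiff:
  assumes "finite A" "finite B"
  shows "card (A \<triangle> B) + 2 * card (A \<inter> B) = card A + card B"
proof -
  have "card (A \<union> B) = card ((A \<triangle> B) \<union> (A \<inter> B))"
    by (rule arg_cong[where f = card]) auto
  also have "\<dots> = card (A \<triangle> B) + card (A \<inter> B)"
    using assms by (intro card_Un_disjoint) (auto simp: symdiff_def)
  finally show ?thesis using card_Un_Int[OF assms] by simp
qed

definition near_pairs :: "nat \<Rightarrow> nat set set" where
  "near_pairs m = {{x, y} | x y. 1 \<le> x \<and> x < y \<and> y \<le> m \<and> y \<le> x + 2}"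

lemma near_pairsE:
  assumes "e \<in> near_pairs m"
  obtains x y where "e = {x, y}" "1 \<le> x" "x < y" "y \<le> m" "y \<le> x + 2"
  using assms unfolding near_pairs_def by blast

lemma doubleton_in_near_pairs_iff:
  "{x, y} \<in> near_pairs m \<longleftrightarrow>
     x \<noteq> y \<and> 1 \<le> x \<and> 1 \<le> y \<and> x \<le> m \<and> y \<le> m \<and> x \<le> y + 2 \<and> y \<le> x + 2"
    (is "_ \<longleftrightarrow> ?near x y")
proof
  assume "{x, y} \<in> near_pairs m"
  then obtain a b where "{x, y} = {a, b}" "1 \<le> a" "a < b" "b \<le> m" "b \<le> a + 2"
    by (rule near_pairsE)
  then show "?near x y"
    by (auto simp: doubleton_eq_iff)
next
  assume xy: "?near x y"
  show "{x, y} \<in> near_pairs m"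
  proof (cases "x < y")
    case True
    then show ?thesis using xy unfolding near_pairs_def by blast
  next
    case False
    then have "{x, y} = {y, x}" "y < x" using xy by auto
    then show ?thesis using xy unfolding near_pairs_def by blast
  qed
qed

lemma card_near_pair: "e \<in> near_pairs m \<Longrightarrow> card e = 2"
  by (auto elim: near_pairsE)

lemma finite_near_pairs: "finite (near_pairs m)"
  by (rule finite_subset[of _ "Pow {1..m}"]) (auto simp: near_pairs_def)

lemma card_near_pairs:
  assumes "2 \<le> m"
  shows "card (near_pairs m) = 2 * m - 3"
proof -
  have split: "near_pairs m = (\<lambda>x. {x, x + 1}) ` {1..m - 1} \<union> (\<lambda>x. {x, x + 2}) ` {1..m - 2}"
  proof (intro set_eqI iffI)
    fix e assume "e \<in> near_pairs m"
    then obtain x y where "e = {x, y}" "1 \<le> x" "x < y" "y \<le> m" "y \<le> x + 2"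
      by (rule near_pairsE)
    moreover from this have "y = x + 1 \<or> y = x + 2" by arith
    ultimately show "e \<in> (\<lambda>x. {x, x + 1}) ` {1..m - 1} \<union> (\<lambda>x. {x, x + 2}) ` {1..m - 2}"
      by auto
  qed (auto simp: doubleton_in_near_pairs_iff)
  have "card (near_pairs m) = card ((\<lambda>x. {x, x + 1}) ` {1..m - 1}) + card ((\<lambda>x. {x, x + 2}) ` {1..m - 2})"
    unfolding split by (rule card_Un_disjoint) (auto simp: doubleton_eq_iff)
  also have "\<dots> = (m - 1) + (m - 2)"
    by (subst (1 2) card_image) (auto simp: inj_on_def doubleton_eq_iff)
  finally show ?thesis using assms by simp
qed

definition near_decomps :: "nat \<Rightarrow> nat set \<Rightarrow> nat set set" where
  "near_decomps m w = {e \<in> near_pairs m. e \<triangle> w \<in> near_pairs m}"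

definition near_common :: "nat \<Rightarrow> nat \<Rightarrow> nat \<Rightarrow> nat set" where
  "near_common m p q = {r. {p, r} \<in> near_pairs m \<and> {q, r} \<in> near_pairs m}"

lemma near_decomps_doubleton_subset:
  assumes "p \<noteq> q"
  shows "near_decomps m {p, q} \<subseteq> (\<lambda>r. {p, r}) ` near_common m p q \<union> (\<lambda>r. {q, r}) ` near_common m p q"
proof
  fix e assume "e \<in> near_decomps m {p, q}"
  then have e: "e \<in> near_pairs m" and f: "e \<triangle> {p, q} \<in> near_pairs m"
    by (auto simp: near_decomps_def)
  obtain x y where xy: "e = {x, y}" "x < y" using e by (auto elim: near_pairsE)
  have card2: "card (e \<triangle> {p, q}) = 2" using f by (rule card_near_pair)
  have "\<not> (x \<in> {p, q} \<and> y \<in> {p, q})"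
  proof
    assume "x \<in> {p, q} \<and> y \<in> {p, q}"
    then have "e = {p, q}" using xy assms by auto
    then show False using card2 by simp
  qed
  moreover have "\<not> (x \<notin> {p, q} \<and> y \<notin> {p, q})"
  proof
    assume "x \<notin> {p, q} \<and> y \<notin> {p, q}"
    then have "e \<triangle> {p, q} = {x, y, p, q}" "card {x, y, p, q} = 4" using xy assms by auto
    then show False using card2 by simp
  qed
  ultimately consider "x = p" "y \<notin> {p, q}" | "x = q" "y \<notin> {p, q}"
    | "y = p" "x \<notin> {p, q}" | "y = q" "x \<notin> {p, q}"
    by auto
  then show "e \<in> (\<lambda>r. {p, r}) ` near_common m p q \<union> (\<lambda>r. {q, r}) ` near_common m p q"
  proof cases
    case 1
    then have "e \<triangle> {p, q} = {q, y}" using xy assms by auto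
    then show ?thesis using 1 e f xy by (auto simp: near_common_def)
  next
    case 2
    then have "e \<triangle> {p, q} = {p, y}" using xy assms by auto
    then show ?thesis using 2 e f xy by (auto simp: near_common_def)
  next
    case 3
    then have "e \<triangle> {p, q} = {q, x}" using xy assms by auto
    then show ?thesis using 3 e f xy by (auto simp: near_common_def insert_commute)
  next
    case 4
    then have "e \<triangle> {p, q} = {p, x}" using xy assms by auto
    then show ?thesis using 4 e f xy by (auto simp: near_common_def insert_commute)
  qed
qed

lemma near_common_subset:
  assumes "p < q"
  shows "near_common m p q \<subseteq> (if q = p + 2 then {p + 1} else {q - 2, p + 2})"
  using assms by (auto simp: near_common_def doubleton_in_near_pairs_iff)

lemma card_near_common_le:
  assumes "p < q"
  shows "card (near_common m p q) \<le> 2"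
proof -
  have "card (near_common m p q) \<le> card (if q = p + 2 then {p + 1} else {q - 2, p + 2})"
    using near_common_subset[OF assms] by (intro card_mono) auto
  also have "\<dots> \<le> 2" by (auto simp: card_insert_if)
  finally show ?thesis .
qed

lemma card_near_common_eq_2D:
  assumes "p < q" "card (near_common m p q) = 2"
  shows "(q = p + 1 \<and> 2 \<le> p \<and> p + 2 \<le> m) \<or> q = p + 3"
proof -
  obtain r s where "r \<noteq> s" "r \<in> near_common m p q" "s \<in> near_common m p q"
    using assms(2) by (auto simp: card_2_iff)
  then show ?thesis
    using assms(1) unfolding near_common_def doubleton_in_near_pairs_iff mem_Collect_eq by arith
qed

lemma card_near_decomps_doubleton_le:
  assumes "p \<noteq> q"
  shows "card (near_decomps m {p, q}) \<le> 2 * card (near_common m p q)"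
proof -
  have fin: "finite (near_common m p q)"
    by (rule finite_subset[of _ "{..m}"]) (auto simp: near_common_def doubleton_in_near_pairs_iff)
  have "card (near_decomps m {p, q})
      \<le> card ((\<lambda>r. {p, r}) ` near_common m p q \<union> (\<lambda>r. {q, r}) ` near_common m p q)"
    using near_decomps_doubleton_subset[OF assms] fin by (intro card_mono) auto
  also have "\<dots> \<le> card ((\<lambda>r. {p, r}) ` near_common m p q) + card ((\<lambda>r. {q, r}) ` near_common m p q)"
    by (rule card_Un_le)
  also have "\<dots> \<le> card (near_common m p q) + card (near_common m p q)"
    by (intro add_mono card_image_le fin)
  finally show ?thesis by simp
qed

lemma near_decomps_card4D:
  assumes "card w = 4" "e \<in> near_decomps m w"
  shows "e \<subseteq> w" "w - e \<in> near_pairs m"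
proof -
  have e: "e \<in> near_pairs m" and f: "e \<triangle> w \<in> near_pairs m"
    using assms(2) by (auto simp: near_decomps_def)
  have fin: "finite e" "finite w"
    using card_near_pair[OF e] assms(1) by (auto intro: card_ge_0_finite)
  have "card (e \<inter> w) = card e"
    using card_symdiff[OF fin] card_near_pair[OF e] card_near_pair[OF f] assms(1) by simp
  then show "e \<subseteq> w"
    using fin by (metis Int_lower1 card_subset_eq le_iff_inf)
  then have "e \<triangle> w = w - e" by auto
  then show "w - e \<in> near_pairs m" using f by simp
qed

lemma near_decomps_quadruple_subset:
  assumes "a < b" "b < c" "c < d"
  shows "near_decomps m {a, b, c, d} \<subseteq>
    {{a, b}, {c, d}} \<union> (if b = a + 1 \<and> c = a + 2 \<and> d = a + 3 then {{a, c}, {b, d}} else {})"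
proof
  fix e assume eD: "e \<in> near_decomps m {a, b, c, d}"
  have "card {a, b, c, d} = 4" using assms by simp
  note sub = near_decomps_card4D[OF this eD]
  have near: "e \<in> near_pairs m" using eD by (simp add: near_decomps_def)
  then obtain x y where e: "e = {x, y}" "x < y" by (rule near_pairsE)
  have rest: "{a, b, c, d} - {x, y} \<in> near_pairs m" using sub(2) e by simp
  have "x \<in> {a, b, c, d}" "y \<in> {a, b, c, d}" using sub(1) e by auto
  then consider "x = a" "y = b" | "x = c" "y = d" | "x = a" "y = c" | "x = b" "y = d"
    | "x = a" "y = d" | "x = b" "y = c"
    using assms \<open>x < y\<close> by auto
  then show "e \<in> {{a, b}, {c, d}} \<union> (if b = a + 1 \<and> c = a + 2 \<and> d = a + 3 then {{a, c}, {b, d}} else {})"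
  proof cases
    case 3
    moreover have "{a, b, c, d} - {a, c} = {b, d}" using assms by auto
    ultimately show ?thesis using assms e near rest by (simp add: doubleton_in_near_pairs_iff)
  next
    case 4
    moreover have "{a, b, c, d} - {b, d} = {a, c}" using assms by auto
    ultimately show ?thesis using assms e near rest by (simp add: doubleton_in_near_pairs_iff)
  next
    case 5
    then show ?thesis using assms e near by (simp add: doubleton_in_near_pairs_iff)
  next
    case 6
    moreover have "{a, b, c, d} - {b, c} = {a, d}" using assms by auto
    ultimately show ?thesis using assms rest by (simp add: doubleton_in_near_pairs_iff)
  qed (use e in auto)
qed

lemma card_near_decomps_doubleton:
  assumes "p < q"
  shows "card (near_decomps m {p, q}) \<le> 4"
    and "3 \<le> card (near_decomps m {p, q}) \<Longrightarrow> (q = p + 1 \<and> 2 \<le> p \<and> p + 2 \<le> m) \<or> q = p + 3"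
proof -
  have bound: "card (near_decomps m {p, q}) \<le> 2 * card (near_common m p q)"
    using assms by (intro card_near_decomps_doubleton_le) simp
  then show "card (near_decomps m {p, q}) \<le> 4"
    using card_near_common_le[OF assms, of m] by linarith
  assume "3 \<le> card (near_decomps m {p, q})"
  then have "card (near_common m p q) = 2"
    using bound card_near_common_le[OF assms, of m] by linarith
  then show "(q = p + 1 \<and> 2 \<le> p \<and> p + 2 \<le> m) \<or> q = p + 3"
    using card_near_common_eq_2D[OF assms] by blast
qed

lemma card_near_decomps_quadruple:
  assumes "a < b" "b < c" "c < d"
  shows "card (near_decomps m {a, b, c, d}) \<le> 4"
    and "3 \<le> card (near_decomps m {a, b, c, d}) \<Longrightarrow> b = a + 1 \<and> c = a + 2 \<and> d = a + 3"
proof -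
  let ?consec = "b = a + 1 \<and> c = a + 2 \<and> d = a + 3"
  have "card (near_decomps m {a, b, c, d}) \<le> card ({{a, b}, {c, d}} \<union> (if ?consec then {{a, c}, {b, d}} else {}))"
    using near_decomps_quadruple_subset[OF assms] by (intro card_mono) auto
  also have "\<dots> \<le> (if ?consec then 4 else 2)"
    by (auto simp: card_insert_if)
  finally show "card (near_decomps m {a, b, c, d}) \<le> 4"
    and "3 \<le> card (near_decomps m {a, b, c, d}) \<Longrightarrow> ?consec"
    by (auto split: if_splits)
qed

lemma card_eq_2_sorted:
  assumes "card w = 2"
  obtains p q :: nat where "p < q" "w = {p, q}"
proof -
  obtain x y where xy: "x \<noteq> y" "w = {x, y}" using assms by (auto simp: card_2_iff)
  show thesis
  proof (cases "x < y")
    case True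
    then show ?thesis using that xy by blast
  next
    case False
    then show ?thesis using that[of y x] xy by (simp add: insert_commute)
  qed
qed

lemma card_eq_4_sorted:
  assumes "card w = 4"
  obtains a b c d :: nat where "a < b" "b < c" "c < d" "w = {a, b, c, d}"
proof -
  define xs where "xs = sorted_list_of_set w"
  have "finite w" using assms by (metis card.infinite zero_neq_numeral)
  then have "set xs = w" "sorted_wrt (<) xs" "length xs = 4"
    using assms by (simp_all add: xs_def)
  moreover from \<open>length xs = 4\<close> obtain a b c d where "xs = [a, b, c, d]"
    by (auto simp: numeral_eq_Suc length_Suc_conv)
  ultimately show thesis using that by auto
qed

lemma card_near_decomps_le:
  assumes "w \<noteq> {}"
  shows "card (near_decomps m w) \<le> 4"
proof (cases "near_decomps m w = {}")
  case False
  then obtain e where "e \<in> near_pairs m" "e \<triangle> w \<in> near_pairs m"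
    by (auto simp: near_decomps_def)
  moreover define f where "f = e \<triangle> w"
  ultimately have e: "card e = 2" and f: "card f = 2" and w: "w = e \<triangle> f"
    by (auto simp: card_near_pair)
  then have "card w + 2 * card (e \<inter> f) = 4"
    using card_symdiff[of e f] by (simp add: card_ge_0_finite)
  moreover have "card (e \<inter> f) \<noteq> 2"
  proof
    assume "card (e \<inter> f) = 2"
    then have "e = f"
      using e f by (metis Int_lower1 Int_lower2 card.infinite card_subset_eq zero_neq_numeral)
    then show False using w assms by simp
  qed
  ultimately have "card w = 2 \<or> card w = 4" by arith
  then show ?thesis
    by (elim disjE card_eq_2_sorted card_eq_4_sorted)
      (simp_all add: card_near_decomps_doubleton(1) card_near_decomps_quadruple(1))
qed (simp)

lemma near_decomps_ge_3_consecutive: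
  assumes "e \<in> near_pairs m" "3 \<le> card (near_decomps m e)"
  obtains a where "e = {a, a + 1}" "2 \<le> a" "a + 2 \<le> m"
proof -
  obtain x y where e: "e = {x, y}" "1 \<le> x" "x < y" "y \<le> m" "y \<le> x + 2"
    using assms(1) by (rule near_pairsE)
  have "(y = x + 1 \<and> 2 \<le> x \<and> x + 2 \<le> m) \<or> y = x + 3"
    using card_near_decomps_doubleton(2)[OF e(3)] assms(2) e(1) by blast
  then have "y = x + 1" "2 \<le> x" "x + 2 \<le> m" using e(5) by auto
  then show thesis using that e(1) by simp
qed

lemma card_near_decomps_last_le:
  assumes "2 \<le> m"
  shows "card (near_decomps m {m - 1, m}) \<le> 2"
proof (rule ccontr)
  assume "\<not> ?thesis"
  moreover have "{m - 1, m} \<in> near_pairs m"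
    using assms unfolding doubleton_in_near_pairs_iff by arith
  ultimately obtain a where "{m - 1, m} = {a, a + 1}" "a + 2 \<le> m"
    by (auto elim: near_decomps_ge_3_consecutive)
  then show False using assms by (auto simp: doubleton_eq_iff)
qed

lemma near_decomps_ge_3_consecutive_symdiff:
  assumes "a \<noteq> b" "3 \<le> card (near_decomps m ({a, a + 1} \<triangle> {b, b + 1}))"
  shows "b = a + 2 \<or> a = b + 2"
proof -
  consider "b = a + 1" | "a = b + 1" | "a + 2 \<le> b" | "b + 2 \<le> a" using assms(1) by arith
  then show ?thesis
  proof cases
    case 1
    then have "{a, a + 1} \<triangle> {b, b + 1} = {a, a + 2}" by auto
    then show ?thesis using assms(2) card_near_decomps_doubleton(2)[of a "a + 2" m] by simp
  next
    case 2
    then have "{a, a + 1} \<triangle> {b, b + 1} = {b, b + 2}" by auto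
    then show ?thesis using assms(2) card_near_decomps_doubleton(2)[of b "b + 2" m] by simp
  next
    case 3
    then have "{a, a + 1} \<triangle> {b, b + 1} = {a, a + 1, b, b + 1}" by auto
    then show ?thesis using 3 assms(2) card_near_decomps_quadruple(2)[of a "a + 1" b "b + 1" m] by simp
  next
    case 4
    then have "{a, a + 1} \<triangle> {b, b + 1} = {b, b + 1, a, a + 1}" by auto
    then show ?thesis using 4 assms(2) card_near_decomps_quadruple(2)[of b "b + 1" a "a + 1" m] by simp
  qed
qed

lemma near_decomps_ge_3_staircase:
  assumes "e1 \<in> near_pairs m" "e2 \<in> near_pairs m" "e1 \<noteq> e2" "e2 = {b, b + 1}"
    and "3 \<le> card (near_decomps m e1)" "3 \<le> card (near_decomps m (e1 \<triangle> e2))"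
  obtains a where "1 \<le> a" "a + 3 \<le> m" "{e1, e2} = {{a, a + 1}, {a + 2, a + 3}}"
proof -
  obtain a where a: "e1 = {a, a + 1}" "2 \<le> a" "a + 2 \<le> m"
    using assms(1,5) by (rule near_decomps_ge_3_consecutive)
  have b: "1 \<le> b" "b + 1 \<le> m" using assms(2,4) by (simp_all add: doubleton_in_near_pairs_iff)
  have "b = a + 2 \<or> a = b + 2"
    using assms(3,4,6) a by (intro near_decomps_ge_3_consecutive_symdiff) auto
  then show thesis
  proof
    assume "b = a + 2"
    then show thesis using that[of a] a b assms(4) by (simp add: eval_nat_numeral)
  next
    assume "a = b + 2"
    then show thesis using that[of b] a b assms(4) by (simp add: eval_nat_numeral insert_commute)
  qed
qed

definition near_nbrs :: "nat \<Rightarrow> nat set \<Rightarrow> nat set set" where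
  "near_nbrs m v = (\<lambda>e. v \<triangle> e) ` near_pairs m"

definition near_N :: "nat \<Rightarrow> nat set set \<Rightarrow> nat set set" where
  "near_N m T = (\<Union>v\<in>T. near_nbrs m v) - T"

lemma finite_near_nbrs: "finite (near_nbrs m v)"
  using finite_near_pairs by (simp add: near_nbrs_def)

lemma card_near_nbrs: "card (near_nbrs m v) = card (near_pairs m)"
  unfolding near_nbrs_def by (rule card_image) (simp add: inj_on_def)

lemma mem_near_nbrs_iff: "z \<in> near_nbrs m v \<longleftrightarrow> v \<triangle> z \<in> near_pairs m"
  unfolding near_nbrs_def by (auto intro: image_eqI[where x = "v \<triangle> z"])

lemma near_nbrs_Int: "near_nbrs m v \<inter> near_nbrs m w = (\<lambda>e. v \<triangle> e) ` near_decomps m (v \<triangle> w)"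
proof (intro set_eqI)
  fix z
  have "w \<triangle> z = (v \<triangle> z) \<triangle> (v \<triangle> w)" "w \<triangle> (v \<triangle> (v \<triangle> z)) = (v \<triangle> z) \<triangle> (v \<triangle> w)"
    by auto
  then show "z \<in> near_nbrs m v \<inter> near_nbrs m w \<longleftrightarrow> z \<in> (\<lambda>e. v \<triangle> e) ` near_decomps m (v \<triangle> w)"
    unfolding near_decomps_def Int_iff mem_near_nbrs_iff
    by (auto intro: image_eqI[where x = "v \<triangle> z"])
qed

lemma card_near_nbrs_Int: "card (near_nbrs m v \<inter> near_nbrs m w) = card (near_decomps m (v \<triangle> w))"
  unfolding near_nbrs_Int by (rule card_image) (simp add: inj_on_def)

lemma staircase_common_near_nbr:
  assumes "1 \<le> a" "a + 3 \<le> m" "{e1, e2} = {{a, a + 1}, {a + 2, a + 3}}"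
  shows "x \<triangle> {a + 1, a + 2} \<in> near_nbrs m x \<inter> near_nbrs m (x \<triangle> e1) \<inter> near_nbrs m (x \<triangle> e2)"
proof -
  have "x \<triangle> e \<triangle> (x \<triangle> g) = e \<triangle> g" for e g :: "nat set"
    by auto
  moreover have "{a, a + 1} \<triangle> {a + 1, a + 2} = {a, a + 2}"
    "{a + 2, a + 3} \<triangle> {a + 1, a + 2} = {a + 1, a + 3}"
    by auto
  moreover have "{a + 1, a + 2} \<in> near_pairs m" "{a, a + 2} \<in> near_pairs m" "{a + 1, a + 3} \<in> near_pairs m"
    using assms(1,2) by (simp_all add: doubleton_in_near_pairs_iff)
  moreover have "e1 = {a, a + 1} \<and> e2 = {a + 2, a + 3} \<or> e1 = {a + 2, a + 3} \<and> e2 = {a, a + 1}"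
    using assms(3) by (auto simp: doubleton_eq_iff)
  ultimately show ?thesis
    unfolding Int_iff mem_near_nbrs_iff by auto
qed

lemma card_near_decomps_sum_le:
  fixes x e1 e2 :: "nat set" and m :: nat
  defines "C \<equiv> near_nbrs m x \<inter> near_nbrs m (x \<triangle> e1) \<inter> near_nbrs m (x \<triangle> e2)"
  assumes e1: "e1 \<in> near_pairs m" and e2: "e2 \<in> near_pairs m" and "e1 \<noteq> e2"
  shows "card (near_decomps m e1) + card (near_decomps m e2) + card (near_decomps m (e1 \<triangle> e2))
      \<le> 11 + card C"
    and "2 \<le> m \<Longrightarrow> e2 = {m - 1, m} \<Longrightarrow>
      card (near_decomps m e1) + card (near_decomps m e2) + card (near_decomps m (e1 \<triangle> e2))
      \<le> 9 + card C"
proof -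
  have le4: "card (near_decomps m e1) \<le> 4" "card (near_decomps m e2) \<le> 4"
    "card (near_decomps m (e1 \<triangle> e2)) \<le> 4"
    using card_near_pair[OF e1] card_near_pair[OF e2] \<open>e1 \<noteq> e2\<close>
    by (auto intro!: card_near_decomps_le)
  have C: "1 \<le> card C"
    if b: "e2 = {b, b + 1}" "3 \<le> card (near_decomps m e1)" "3 \<le> card (near_decomps m (e1 \<triangle> e2))"
    for b
  proof -
    obtain a where "1 \<le> a" "a + 3 \<le> m" "{e1, e2} = {{a, a + 1}, {a + 2, a + 3}}"
      using e1 e2 \<open>e1 \<noteq> e2\<close> b by (rule near_decomps_ge_3_staircase)
    then have "C \<noteq> {}"
      unfolding C_def by (blast dest: staircase_common_near_nbr)
    moreover have "finite C" unfolding C_def using finite_near_nbrs by blast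
    ultimately show ?thesis by (simp add: Suc_le_eq card_gt_0_iff)
  qed
  show "card (near_decomps m e1) + card (near_decomps m e2) + card (near_decomps m (e1 \<triangle> e2))
      \<le> 11 + card C"
  proof (cases "3 \<le> card (near_decomps m e2)")
    case True
    then obtain b where "e2 = {b, b + 1}" using e2 by (auto elim: near_decomps_ge_3_consecutive)
    then show ?thesis using C le4 by force
  qed (use le4 in linarith)
  assume "2 \<le> m" "e2 = {m - 1, m}"
  then have "card (near_decomps m e2) \<le> 2" "e2 = {m - 1, m - 1 + 1}"
    using card_near_decomps_last_le by auto
  then show "card (near_decomps m e1) + card (near_decomps m e2) + card (near_decomps m (e1 \<triangle> e2))
      \<le> 9 + card C"
    using C le4 by force
qed

lemma card_Un4_ge:
  assumes "finite A" "finite B" "finite C" "finite D"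
  shows "card A + card B + card C + card D + card (A \<inter> B \<inter> C) \<le>
    card (A \<union> B \<union> C \<union> D) + card (A \<inter> B) + card (A \<inter> C) + card (B \<inter> C)
      + card (A \<inter> D) + card (B \<inter> D) + card (C \<inter> D)"
proof -
  have AB: "card (A \<union> B) + card (A \<inter> B) = card A + card B"
    using card_Un_Int[of A B] assms by simp
  have ABC: "card (A \<union> B \<union> C) + card ((A \<union> B) \<inter> C) = card (A \<union> B) + card C"
    using card_Un_Int[of "A \<union> B" C] assms by simp
  have "card ((A \<inter> C) \<union> (B \<inter> C)) + card ((A \<inter> C) \<inter> (B \<inter> C)) = card (A \<inter> C) + card (B \<inter> C)"
    using card_Un_Int[of "A \<inter> C" "B \<inter> C"] assms by simp
  moreover have "(A \<union> B) \<inter> C = (A \<inter> C) \<union> (B \<inter> C)" "(A \<inter> C) \<inter> (B \<inter> C) = A \<inter> B \<inter> C"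
    by auto
  ultimately have ABC_C: "card ((A \<union> B) \<inter> C) + card (A \<inter> B \<inter> C) = card (A \<inter> C) + card (B \<inter> C)"
    by simp
  have ABCD: "card (A \<union> B \<union> C \<union> D) + card ((A \<union> B \<union> C) \<inter> D) = card (A \<union> B \<union> C) + card D"
    using card_Un_Int[of "A \<union> B \<union> C" D] assms by simp
  have "card ((A \<union> B \<union> C) \<inter> D) = card ((A \<inter> D) \<union> (B \<inter> D) \<union> (C \<inter> D))"
    by (rule arg_cong[where f = card]) auto
  also have "\<dots> \<le> card (A \<inter> D) + card (B \<inter> D) + card (C \<inter> D)"
    by (meson card_Un_le add_right_mono order_trans)
  finally show ?thesis using AB ABC ABC_C ABCD by linarith
qed

theorem card_near_N_ge:
  assumes "2 \<le> m" and e1: "e1 \<in> near_pairs m" and e2: "e2 \<in> near_pairs m" and "e1 \<noteq> e2"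
    and u: "u \<notin> {x, x \<triangle> e1, x \<triangle> e2}"
  shows "8 * m \<le> card (near_N m {u, x, x \<triangle> e1, x \<triangle> e2}) + 39"
    and "e2 = {m - 1, m} \<Longrightarrow> 8 * m \<le> card (near_N m {u, x, x \<triangle> e1, x \<triangle> e2}) + 37"
proof -
  let ?T = "{u, x, x \<triangle> e1, x \<triangle> e2}"
  let ?S = "\<Union>v\<in>?T. near_nbrs m v"
  let ?d = "\<lambda>w. card (near_decomps m w)"
  let ?C = "near_nbrs m x \<inter> near_nbrs m (x \<triangle> e1) \<inter> near_nbrs m (x \<triangle> e2)"
  have "card ?S \<le> card (?S - ?T) + card ?T"
    using diff_card_le_card_Diff[of ?T ?S] by simp
  moreover have "card ?T \<le> 4" by (auto simp: card_insert_if)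
  ultimately have S: "card ?S \<le> card (near_N m ?T) + 4"
    unfolding near_N_def by linarith
  have "?S = near_nbrs m x \<union> near_nbrs m (x \<triangle> e1) \<union> near_nbrs m (x \<triangle> e2) \<union> near_nbrs m u"
    by auto
  moreover have "x \<triangle> (x \<triangle> e) = e" "x \<triangle> e1 \<triangle> (x \<triangle> e2) = e1 \<triangle> e2" for e
    by auto
  ultimately have "4 * card (near_pairs m) + card ?C
      \<le> card ?S + ?d e1 + ?d e2 + ?d (e1 \<triangle> e2) + ?d (x \<triangle> u) + ?d (x \<triangle> e1 \<triangle> u) + ?d (x \<triangle> e2 \<triangle> u)"
    using card_Un4_ge[of "near_nbrs m x" "near_nbrs m (x \<triangle> e1)" "near_nbrs m (x \<triangle> e2)" "near_nbrs m u"]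
    unfolding card_near_nbrs_Int card_near_nbrs by (simp add: finite_near_nbrs)
  moreover have "?d (x \<triangle> u) \<le> 4" "?d (x \<triangle> e1 \<triangle> u) \<le> 4" "?d (x \<triangle> e2 \<triangle> u) \<le> 4"
    using u by (auto intro!: card_near_decomps_le)
  moreover have "card (near_pairs m) = 2 * m - 3"
    using \<open>2 \<le> m\<close> by (rule card_near_pairs)
  ultimately have bound: "8 * m + card ?C \<le> card (near_N m ?T) + 28 + ?d e1 + ?d e2 + ?d (e1 \<triangle> e2)"
    using S \<open>2 \<le> m\<close> by linarith
  show "8 * m \<le> card (near_N m ?T) + 39"
    using bound card_near_decomps_sum_le(1)[OF e1 e2 \<open>e1 \<noteq> e2\<close>, of x] by linarith
  assume "e2 = {m - 1, m}"
  then show "8 * m \<le> card (near_N m ?T) + 37"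
    using bound card_near_decomps_sum_le(2)[OF e1 e2 \<open>e1 \<noteq> e2\<close> \<open>2 \<le> m\<close>, of x] by linarith
qed

definition AQ_gens :: "nat \<Rightarrow> nat set set" where
  "AQ_gens n = {{i} | i. 1 \<le> i \<and> i \<le> n} \<union> {{1..i} | i. 2 \<le> i \<and> i \<le> n}"

lemma AQ_gensE:
  assumes "g \<in> AQ_gens n"
  obtains (bit) i where "g = {i}" "1 \<le> i" "i \<le> n" | (low) i where "g = {1..i}" "2 \<le> i" "i \<le> n"
  using assms unfolding AQ_gens_def by blast

lemma AQ_gens_subset:
  assumes "g \<in> AQ_gens n"
  shows "g \<subseteq> {1..n}" "g \<noteq> {}"
  using assms by (auto elim: AQ_gensE)

lemma flip_bit_eq_symdiff: "flip_bit X i = X \<triangle> {i}"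
  by (auto simp: flip_bit_def)

lemma flip_low_eq_symdiff: "flip_low X i = X \<triangle> {1..i}"
  by (auto simp: flip_low_def)

lemma AQ_adj_iff: "AQ_adj n V W \<longleftrightarrow> V \<subseteq> {1..n} \<and> (\<exists>g\<in>AQ_gens n. W = V \<triangle> g)"
proof
  assume "AQ_adj n V W"
  then show "V \<subseteq> {1..n} \<and> (\<exists>g\<in>AQ_gens n. W = V \<triangle> g)"
    unfolding AQ_adj_def AQ_vertices_def AQ_gens_def flip_bit_eq_symdiff flip_low_eq_symdiff by auto
next
  assume "V \<subseteq> {1..n} \<and> (\<exists>g\<in>AQ_gens n. W = V \<triangle> g)"
  then obtain g where V: "V \<subseteq> {1..n}" and g: "g \<in> AQ_gens n" "W = V \<triangle> g" by blast
  have "W \<subseteq> {1..n}" using symdiff_subset[OF V AQ_gens_subset(1)] g by simp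
  moreover have "V \<noteq> W" using AQ_gens_subset(2)[OF g(1)] g(2) by (metis symdiff_cancel(1,3))
  moreover from g have "(\<exists>i\<in>{1..n}. W = flip_bit V i) \<or> (\<exists>i\<in>{2..n}. W = flip_low V i)"
    by (cases rule: AQ_gensE) (auto simp: flip_bit_eq_symdiff flip_low_eq_symdiff)
  ultimately show "AQ_adj n V W"
    using V unfolding AQ_adj_def AQ_vertices_def by blast
qed

lemma AQ_nbr_eq: "V \<subseteq> {1..n} \<Longrightarrow> AQ_nbr n V = (\<lambda>g. V \<triangle> g) ` AQ_gens n"
  by (auto simp: AQ_nbr_def AQ_adj_iff)

lemma AQ_nbr_subset: "AQ_nbr n V \<subseteq> Pow {1..n}"
  by (auto simp: AQ_nbr_def AQ_adj_def AQ_vertices_def)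

definition AQ_code :: "nat \<Rightarrow> nat set \<Rightarrow> nat set" where
  "AQ_code n X = {i \<in> {1..n + 1}. if i = 1 then (1 \<in> X) \<noteq> (2 \<in> X) else (i - 1 \<in> X) \<noteq> (i + 1 \<in> X)}"

lemma AQ_code_symdiff: "AQ_code n (X \<triangle> Y) = AQ_code n X \<triangle> AQ_code n Y"
  unfolding AQ_code_def by auto

lemma inj_on_AQ_code: "inj_on (AQ_code n) (Pow {1..n})"
proof (rule inj_onI, rule ccontr)
  fix X Y assume "X \<in> Pow {1..n}" "Y \<in> Pow {1..n}" "AQ_code n X = AQ_code n Y" "X \<noteq> Y"
  then have W: "X \<triangle> Y \<subseteq> {1..n}" "X \<triangle> Y \<noteq> {}" "AQ_code n (X \<triangle> Y) = {}"
    by (simp_all add: symdiff_subset AQ_code_symdiff)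
  define k where "k = Max (X \<triangle> Y)"
  have fin: "finite (X \<triangle> Y)" using W(1) finite_subset by blast
  have "k \<in> X \<triangle> Y" unfolding k_def using fin W(2) by (rule Max_in)
  moreover have "k + 2 \<notin> X \<triangle> Y" using Max_ge[OF fin, of "k + 2"] k_def by fastforce
  moreover have "1 \<le> k" "k \<le> n" using \<open>k \<in> X \<triangle> Y\<close> W(1) by auto
  ultimately have "k + 1 \<in> AQ_code n (X \<triangle> Y)"
    unfolding AQ_code_def by (simp del: mem_symdiff)
  then show False using W(3) by simp
qed

lemma AQ_code_low: "1 \<le> i \<Longrightarrow> i \<le> n \<Longrightarrow> AQ_code n {1..i} = {i, i + 1}"
  unfolding AQ_code_def by (auto split: if_splits)

lemma AQ_code_bit: "1 \<le> i \<Longrightarrow> i \<le> n \<Longrightarrow> AQ_code n {i} = (if i = 1 then {1, 2} else {i - 1, i + 1})"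
  unfolding AQ_code_def by (auto split: if_splits)

lemma AQ_code_gens: "1 \<le> n \<Longrightarrow> AQ_code n ` AQ_gens n = near_pairs (n + 1)"
proof (intro set_eqI iffI)
  fix e assume "e \<in> AQ_code n ` AQ_gens n"
  then obtain g where g: "g \<in> AQ_gens n" "e = AQ_code n g" by blast
  from g(1) show "e \<in> near_pairs (n + 1)"
  proof (cases rule: AQ_gensE)
    case (bit i)
    then show ?thesis by (simp add: g(2) AQ_code_bit doubleton_in_near_pairs_iff; arith)
  next
    case (low i)
    then show ?thesis using AQ_code_low[of i n] by (simp add: g(2) doubleton_in_near_pairs_iff)
  qed
next
  fix e assume "e \<in> near_pairs (n + 1)" "1 \<le> n"
  then obtain x y where e: "e = {x, y}" "1 \<le> x" "x < y" "y \<le> n + 1" "y \<le> x + 2"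
    by (auto elim: near_pairsE)
  then consider "x = 1" "y = 2" | "y = x + 1" "2 \<le> x" | "y = x + 2" by arith
  then show "e \<in> AQ_code n ` AQ_gens n"
  proof cases
    case 1
    then have "e = AQ_code n {1}" "{1} \<in> AQ_gens n"
      using e \<open>1 \<le> n\<close> by (auto simp: AQ_code_bit AQ_gens_def)
    then show ?thesis by blast
  next
    case 2
    then have "e = AQ_code n {1..x}" "{1..x} \<in> AQ_gens n"
      using e AQ_code_low[of x n] by (auto simp: AQ_gens_def)
    then show ?thesis by blast
  next
    case 3
    then have "e = AQ_code n {x + 1}" "{x + 1} \<in> AQ_gens n"
      using e by (auto simp: AQ_code_bit AQ_gens_def)
    then show ?thesis by blast
  qed
qed

lemma AQ_code_nbr:
  assumes "V \<subseteq> {1..n}" "1 \<le> n"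
  shows "AQ_code n ` AQ_nbr n V = near_nbrs (n + 1) (AQ_code n V)"
proof -
  have "AQ_code n ` AQ_nbr n V = (\<lambda>e. AQ_code n V \<triangle> e) ` (AQ_code n ` AQ_gens n)"
    unfolding AQ_nbr_eq[OF assms(1)] image_image AQ_code_symdiff ..
  then show ?thesis
    unfolding AQ_code_gens[OF assms(2)] near_nbrs_def .
qed

lemma card_AQ_N:
  assumes "T \<subseteq> Pow {1..n}" "1 \<le> n"
  shows "card (AQ_N n T) = card (near_N (n + 1) (AQ_code n ` T))"
proof -
  have S: "(\<Union>V\<in>T. AQ_nbr n V) \<subseteq> Pow {1..n}"
    using AQ_nbr_subset by blast
  have "AQ_code n ` AQ_N n T = AQ_code n ` (\<Union>V\<in>T. AQ_nbr n V) - AQ_code n ` T"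
    unfolding AQ_N_def by (rule inj_on_image_set_diff[OF inj_on_AQ_code]) (use S assms(1) in auto)
  also have "AQ_code n ` (\<Union>V\<in>T. AQ_nbr n V) = (\<Union>V\<in>T. near_nbrs (n + 1) (AQ_code n V))"
    unfolding image_UN using assms by (intro SUP_cong AQ_code_nbr) auto
  finally have "AQ_code n ` AQ_N n T = near_N (n + 1) (AQ_code n ` T)"
    by (simp add: near_N_def)
  moreover have "inj_on (AQ_code n) (AQ_N n T)"
    using inj_on_AQ_code by (rule inj_on_subset) (use S in \<open>auto simp: AQ_N_def\<close>)
  ultimately show ?thesis
    by (metis card_image)
qed

theorem lemma2p9:
  fixes n :: nat and X Y Z U :: "nat set"
  assumes "n \<ge> 5"
    and "AQ_path2 n Y X Z"
    and "U \<in> AQ_N n {Y, X, Z}"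
  shows "int (card (AQ_N n {U, X, Y, Z})) \<ge> 8 * int n - 31 \<and>
         (Z = flip_low X n \<longrightarrow> int (card (AQ_N n {U, X, Y, Z})) \<ge> 8 * int n - 29)"
proof -
  obtain g1 g2 where X: "X \<subseteq> {1..n}" and g: "g1 \<in> AQ_gens n" "g2 \<in> AQ_gens n"
    and YZ: "Y = X \<triangle> g1" "Z = X \<triangle> g2" "Y \<noteq> Z" and Y: "Y \<subseteq> {1..n}"
    using assms(2) unfolding AQ_path2_def AQ_adj_iff by (metis symdiff_cancel(2))
  from assms(3) have U: "U \<subseteq> {1..n}" "U \<notin> {Y, X, Z}"
    using AQ_nbr_subset unfolding AQ_N_def by auto
  define c where "c = AQ_code n"
  have inj: "c A = c B \<longleftrightarrow> A = B" if "A \<subseteq> {1..n}" "B \<subseteq> {1..n}" for A B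
    using inj_on_AQ_code[of n] that unfolding c_def inj_on_def by blast
  have Z: "Z \<subseteq> {1..n}" using symdiff_subset[OF X AQ_gens_subset(1)[OF g(2)]] YZ(2) by simp
  have e: "c g1 \<in> near_pairs (n + 1)" "c g2 \<in> near_pairs (n + 1)" "c g1 \<noteq> c g2"
    using g AQ_code_gens[of n] assms(1) YZ inj[OF Y Z] unfolding c_def
    by (auto simp: AQ_code_symdiff)
  have "c ` {U, X, Y, Z} = {c U, c X, c X \<triangle> c g1, c X \<triangle> c g2}"
    unfolding YZ c_def by (simp add: AQ_code_symdiff)
  then have N: "card (AQ_N n {U, X, Y, Z}) = card (near_N (n + 1) {c U, c X, c X \<triangle> c g1, c X \<triangle> c g2})"
    using card_AQ_N[of "{U, X, Y, Z}" n] X Y Z U assms(1) unfolding c_def by auto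
  have u: "c U \<notin> {c X, c X \<triangle> c g1, c X \<triangle> c g2}"
    using U inj[OF U(1) X] inj[OF U(1) Y] inj[OF U(1) Z] YZ unfolding c_def by (auto simp: AQ_code_symdiff)
  have "Z = flip_low X n \<Longrightarrow> c g2 = {n, n + 1}"
    using YZ(2) AQ_code_low[of n n] assms(1) unfolding c_def flip_low_eq_symdiff by simp
  then show ?thesis
    using card_near_N_ge[OF _ e u] N assms(1) by auto
qed

end
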